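(* Let $X^{2n}$ be a quasitoric manifold over a simple polytope $P^n$ with characteristic function $\lambda$, let $T^{n-1}\subset T^n$ be a subtorus, and let $x$ be a fixed point of the $T^n$-action. Then $x$ is not an isolated fixed point of the restricted $T^{n-1}$-action if and only if some $n-1$ of the characteristic values at $x$ lie in $\Pi$.
   Context: A quasitoric manifold $X^{2n}$ carries a locally standard $T^n$-action with orbit space a simple $n$-polytope $P^n$; for each facet $F$ of $P^n$, $\lambda(F)\in N=\mathrm{Hom}(T^1,T^n)\cong\mathbb{Z}^n$ is the primitive vector of the circle subgroup stabilizing points over the interior of $F$. The fixed points correspond to vertices of $P^n$; the characteristic values at a fixed point $x$ are the $n$ vectors $\lambda(F)$ for the $n$ facets $F$ containing the corresponding vertex. For a subtorus $T^{n-1}\subset T^n$ with quotient map $p\colon T^n\to T^n/T^{n-1}\cong T^1$, let $\Pi=\ker(p_*\colon N\to \mathrm{Hom}(T^1,T^n/T^{n-1})\cong\mathbb{Z})$, which equals the image of $\mathrm{Hom}(T^1,T^{n-1})$ in $N$. *)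

theory Defs
  imports "HOL-Analysis.Analysis"
begin

text \<open>N = Z^n is int^'n; the torus T^n = R^n / Z^n, with
 elements represented by vectors in real^'n.
 The quasitoric manifold is the canonical model X = (P x T^n)/~ of
 Davis-Januszkiewicz, realised as the set of equivalence classes of pairs
 (p,g) in P x R^n with the quotient topology.\<close>

definition lattice :: "(real^'n) set" where
  "lattice = {z. \<forall>i. z $ i \<in> \<int>}"

definition ivec :: "int^'n \<Rightarrow> real^'n" where
  "ivec k = (\<chi> i. of_int (k $ i))"

definition simple_polytope :: "(real^'n) set \<Rightarrow> bool" where
  "simple_polytope P \<longleftrightarrow> polytope P \<and> aff_dim P = int CARD('n) \<and>
     (\<forall>v. v extreme_point_of P \<longrightarrow> card {F. F facet_of P \<and> v \<in> F} = CARD('n))"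

definition char_function :: "(real^'n) set \<Rightarrow> ((real^'n) set \<Rightarrow> int^'n) \<Rightarrow> bool" where
  "char_function P lam \<longleftrightarrow>
     (\<forall>v. v extreme_point_of P \<longrightarrow>
        (\<exists>f :: 'n \<Rightarrow> (real^'n) set. bij_betw f UNIV {F. F facet_of P \<and> v \<in> F} \<and>
           det (\<chi> i j. lam (f j) $ i) \<in> {1, -1::int}))"

text \<open>Isotropy subgroup (lifted to R^n) at a point p of P: the subtorus generated
 by the circles lam(F) for the facets F containing p.\<close>
definition isotropy :: "(real^'n) set \<Rightarrow> ((real^'n) set \<Rightarrow> int^'n) \<Rightarrow> real^'n \<Rightarrow> (real^'n) set" where
  "isotropy P lam p =
     {t. \<exists>w \<in> span (ivec ` lam ` {F. F facet_of P \<and> p \<in> F}). t - w \<in> lattice}"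

definition qrel :: "(real^'n) set \<Rightarrow> ((real^'n) set \<Rightarrow> int^'n) \<Rightarrow> (((real^'n) \<times> (real^'n)) \<times> ((real^'n) \<times> (real^'n))) set" where
  "qrel P lam = {((p, g), (q, h)). p \<in> P \<and> q = p \<and> g - h \<in> isotropy P lam p}"

definition qspace :: "(real^'n) set \<Rightarrow> ((real^'n) set \<Rightarrow> int^'n) \<Rightarrow> ((real^'n) \<times> (real^'n)) set set" where
  "qspace P lam = (P \<times> UNIV) // qrel P lam"

definition qopen :: "(real^'n) set \<Rightarrow> ((real^'n) set \<Rightarrow> int^'n) \<Rightarrow> ((real^'n) \<times> (real^'n)) set set \<Rightarrow> bool" where
  "qopen P lam U \<longleftrightarrow> U \<subseteq> qspace P lam \<and> openin (top_of_set (P \<times> UNIV)) (\<Union>U)"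

definition tact :: "real^'n \<Rightarrow> ((real^'n) \<times> (real^'n)) set \<Rightarrow> ((real^'n) \<times> (real^'n)) set" where
  "tact t c = (\<lambda>(p, g). (p, g + t)) ` c"

text \<open>A codimension-one subtorus T^{n-1} of T^n is the image of a rational
 linear subspace V of R^n of dimension n-1.\<close>
definition subtorus_codim1 :: "(real^'n) set \<Rightarrow> bool" where
  "subtorus_codim1 V \<longleftrightarrow> subspace V \<and> dim V = CARD('n) - 1 \<and> V = span (V \<inter> lattice)"

text \<open>Pi = ker(p_* : N -> Hom(T^1, T^n/T^{n-1})).\<close>
definition Pi_lattice :: "(real^'n) set \<Rightarrow> (int^'n) set" where
  "Pi_lattice V = {k. ivec k \<in> V}"

definition fixed_by :: "(real^'n) set \<Rightarrow> ((real^'n) \<times> (real^'n)) set \<Rightarrow> bool" where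
  "fixed_by H y \<longleftrightarrow> (\<forall>t\<in>H. tact t y = y)"

definition isolated_fixed_point ::
  "(real^'n) set \<Rightarrow> ((real^'n) set \<Rightarrow> int^'n) \<Rightarrow> (real^'n) set \<Rightarrow> ((real^'n) \<times> (real^'n)) set \<Rightarrow> bool" where
  "isolated_fixed_point P lam H x \<longleftrightarrow> fixed_by H x \<and>
     (\<exists>U. qopen P lam U \<and> x \<in> U \<and> (\<forall>y\<in>U. fixed_by H y \<longrightarrow> y = x))"

end

theory Submission
  imports Defs
begin

text \<open>A fixed point x of T^n lies over a point v of P whose isotropy is all of T^n. Since the
  lattice is countable, a subspace contained in a span plus the lattice lies in the span, so the
  characteristic vectors at v span R^n, and as P is simple, v is a vertex on exactly n facets.
  A point over q is fixed by the subtorus, the image of V, iff V lies in the span of the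
  characteristic vectors of the facets through q; for q near v these facets are among those
  through v. If n - 1 characteristic vectors at v lie in V, they span V, and moving from v along
  the edge cut out by their n - 1 facets gives fixed points arbitrarily close to x. Conversely, a
  fixed point over q \<noteq> v near v lies on at least dim V = n - 1 facets through v, hence on exactly
  n - 1, and their characteristic vectors then span V.\<close>

section \<open>Linear algebra\<close>

text \<open>If u in V lies outside W, let a be its component orthogonal to W. For every real s the
  offset of s u from W lies in L and has inner product s (a \<bullet> u) with a, where a \<bullet> u \<noteq> 0, yet a has only
  countably many inner products with elements of L.\<close>

lemma subspace_subset_if_countable_offsets:
  fixes V W :: "'a::euclidean_space set"
  assumes "subspace V" "subspace W" "countable L"
    and offsets: "\<And>t. t \<in> V \<Longrightarrow> \<exists>w\<in>W. t - w \<in> L"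
  shows "V \<subseteq> W"
proof
  fix u assume "u \<in> V"
  show "u \<in> W"
  proof (rule ccontr)
    assume "u \<notin> W"
    obtain y a where "y \<in> span W" and a_orth: "\<And>w. w \<in> span W \<Longrightarrow> orthogonal a w"
      and u_eq: "u = y + a"
      using orthogonal_subspace_decomp_exists[of W u] by metis
    have "span W = W" using \<open>subspace W\<close> by (simp add: span_eq_iff)
    have "a \<noteq> 0"
    proof
      assume "a = 0"
      then have "u \<in> span W" using u_eq \<open>y \<in> span W\<close> by simp
      then show False using \<open>span W = W\<close> \<open>u \<notin> W\<close> by simp
    qed
    have au: "a \<bullet> u = a \<bullet> a"
      using a_orth[OF \<open>y \<in> span W\<close>] by (simp add: u_eq inner_add_right orthogonal_def)
    have "a \<bullet> u \<noteq> 0" using \<open>a \<noteq> 0\<close> au by simp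
    have multiples: "s * (a \<bullet> u) \<in> (\<lambda>l. a \<bullet> l) ` L" for s
    proof -
      obtain w where "w \<in> W" and "s *\<^sub>R u - w \<in> L"
        using offsets[OF subspace_scale[OF \<open>subspace V\<close> \<open>u \<in> V\<close>]] by blast
      moreover have "a \<bullet> w = 0"
        using a_orth[of w] \<open>w \<in> W\<close> by (simp add: orthogonal_def span_base)
      then have "s * (a \<bullet> u) = a \<bullet> (s *\<^sub>R u - w)" by (simp add: inner_diff_right)
      ultimately show ?thesis by (intro image_eqI)
    qed
    have "UNIV \<subseteq> (\<lambda>r. r / (a \<bullet> u)) ` (\<lambda>l. a \<bullet> l) ` L"
    proof
      fix r :: real
      have "r = r * (a \<bullet> u) / (a \<bullet> u)" using \<open>a \<bullet> u \<noteq> 0\<close> by simp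
      then show "r \<in> (\<lambda>r. r / (a \<bullet> u)) ` (\<lambda>l. a \<bullet> l) ` L"
        using multiples by (rule image_eqI)
    qed
    then have "countable (UNIV :: real set)"
      using \<open>countable L\<close> by (metis countable_image countable_subset)
    then show False using uncountable_UNIV_real by blast
  qed
qed

lemma DIM_le_card_if_span_UNIV:
  fixes f :: "'b \<Rightarrow> 'a::euclidean_space"
  assumes "finite F" and "span (f ` F) = UNIV"
  shows "DIM('a) \<le> card F"
proof -
  have "DIM('a) = dim (UNIV :: 'a set)" by simp
  also have "\<dots> \<le> card (f ` F)" using assms by (intro dim_le_card) auto
  also have "\<dots> \<le> card F" using \<open>finite F\<close> by (rule card_image_le)
  finally show ?thesis .
qed

lemma exists_nonzero_orthogonal_to_image:
  fixes f :: "'b \<Rightarrow> 'a::euclidean_space"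
  assumes "finite S" and "card S < DIM('a)"
  obtains d where "d \<noteq> 0" and "\<And>s. s \<in> S \<Longrightarrow> f s \<bullet> d = 0"
proof -
  have "dim (f ` S) \<le> card (f ` S)"
    using \<open>finite S\<close> by (simp add: dim_le_card')
  also have "\<dots> \<le> card S"
    using \<open>finite S\<close> by (rule card_image_le)
  finally have "dim (f ` S) < DIM('a)"
    using \<open>card S < DIM('a)\<close> by linarith
  then obtain d where "d \<noteq> 0" and orth: "\<And>y. y \<in> span (f ` S) \<Longrightarrow> orthogonal d y"
    using orthogonal_to_subspace_exists by blast
  have "f s \<bullet> d = 0" if "s \<in> S" for s
    using orth[OF span_base[OF imageI[OF that]]] by (simp add: orthogonal_def inner_commute)
  with \<open>d \<noteq> 0\<close> show ?thesis using that by blast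
qed

lemma span_image_eq_codim1_subspace:
  fixes f :: "'b \<Rightarrow> 'a::euclidean_space"
  assumes "span (f ` A) = UNIV" and "A \<subseteq> insert a S"
    and "subspace V" and "dim V = DIM('a) - 1" and "f ` S \<subseteq> V"
  shows "span (f ` S) = V"
proof (rule subspace_dim_equal)
  show "span (f ` S) \<subseteq> V" using assms(3,5) by (rule span_minimal[rotated])
  have "UNIV \<subseteq> span (insert (f a) (f ` S))"
    using assms(1,2) span_mono[of "f ` A" "insert (f a) (f ` S)"] by auto
  then have "DIM('a) \<le> dim (insert (f a) (f ` S))"
    using dim_subset[of "UNIV :: 'a set"] by (metis dim_UNIV dim_span)
  also have "\<dots> \<le> dim (f ` S) + 1" by (simp add: dim_insert)
  finally show "dim V \<le> dim (span (f ` S))" using assms(4) by simp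
qed (simp_all add: assms(3))

section \<open>Facets of full-dimensional polyhedra\<close>

lemma affine_hull_eq_hyperplane:
  fixes C :: "'a::euclidean_space set"
  assumes "a \<noteq> 0" and "C \<subseteq> {x. a \<bullet> x = b}" and "aff_dim C = int DIM('a) - 1"
  shows "affine hull C = {x. a \<bullet> x = b}"
proof (rule affine_dim_equal)
  have "C \<noteq> {}"
    using assms(3) by auto
  then show "affine hull C \<noteq> {}" by simp
  show "affine hull C \<subseteq> {x. a \<bullet> x = b}"
    using assms(2) by (simp add: affine_hyperplane hull_minimal)
  show "aff_dim (affine hull C) = aff_dim {x. a \<bullet> x = b}"
    using assms(1,3) by simp
qed (simp_all add: affine_hyperplane)

lemma hyperplane_same_side:
  fixes a c z w :: "'a::real_inner"
  assumes same: "{x. a \<bullet> x = b} = {x. c \<bullet> x = e}"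
    and "a \<bullet> z < b" "c \<bullet> z < e" and "c \<bullet> w \<le> e"
  shows "a \<bullet> w \<le> b"
proof (rule ccontr)
  assume "\<not> a \<bullet> w \<le> b"
  moreover from this have "c \<bullet> w \<noteq> e" using same by (auto simp: set_eq_iff)
  ultimately have aw: "b < a \<bullet> w" and cw: "c \<bullet> w < e" using \<open>c \<bullet> w \<le> e\<close> by auto
  define t where "t = (b - a \<bullet> z) / (a \<bullet> w - a \<bullet> z)"
  have "0 < t" "t < 1" using aw \<open>a \<bullet> z < b\<close> by (auto simp: t_def field_simps)
  define p where "p = (1 - t) *\<^sub>R z + t *\<^sub>R w"
  have "a \<bullet> p = a \<bullet> z + t * (a \<bullet> w - a \<bullet> z)"
    by (simp add: p_def inner_add_right algebra_simps)
  moreover have "t * (a \<bullet> w - a \<bullet> z) = b - a \<bullet> z"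
    using aw \<open>a \<bullet> z < b\<close> by (simp add: t_def)
  ultimately have "a \<bullet> p = b" by simp
  then have "c \<bullet> p = e" using same by blast
  moreover have "c \<bullet> p < e"
  proof -
    have "(1 - t) * (c \<bullet> z) + t * (c \<bullet> w) < (1 - t) * e + t * e"
      using \<open>0 < t\<close> \<open>t < 1\<close> \<open>c \<bullet> z < e\<close> cw
      by (intro add_less_le_mono mult_strict_left_mono mult_left_mono) auto
    then show ?thesis by (simp add: p_def inner_add_right algebra_simps)
  qed
  ultimately show False by simp
qed

lemma common_hyperplane_consistent_sign:
  fixes v z d :: "'a::real_inner"
  assumes interior: "\<And>h. h \<in> G \<Longrightarrow> a h \<bullet> z < b h"
    and tight: "\<And>h. h \<in> G \<Longrightarrow> a h \<bullet> v = b h"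
    and common: "\<And>h h'. h \<in> G \<Longrightarrow> h' \<in> G \<Longrightarrow> {x. a h \<bullet> x = b h} = {x. a h' \<bullet> x = b h'}"
  obtains s :: real where "\<bar>s\<bar> = 1" and "\<And>h. h \<in> G \<Longrightarrow> a h \<bullet> (s *\<^sub>R d) \<le> 0"
proof (cases "\<exists>h0\<in>G. a h0 \<bullet> d > 0")
  case True
  then obtain h0 where "h0 \<in> G" and "a h0 \<bullet> d > 0" by blast
  have "a h \<bullet> (- d) \<le> 0" if "h \<in> G" for h
  proof -
    have "a h0 \<bullet> (v - d) \<le> b h0"
      using tight[OF \<open>h0 \<in> G\<close>] \<open>a h0 \<bullet> d > 0\<close> by (simp add: inner_diff_right)
    then have "a h \<bullet> (v - d) \<le> b h"
      using hyperplane_same_side[OF common[OF that \<open>h0 \<in> G\<close>] interior[OF that]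
          interior[OF \<open>h0 \<in> G\<close>]] by blast
    then show ?thesis using tight[OF that] by (simp add: inner_diff_right)
  qed
  then show ?thesis using that[of "-1"] by simp
next
  case False
  then show ?thesis using that[of 1] by (simp add: not_less)
qed

lemma halfspaces_feasible_direction:
  fixes v d :: "'a::real_inner"
  assumes "finite H" and "\<And>h. h \<in> H \<Longrightarrow> a h \<bullet> v \<le> b h"
    and "\<And>h. h \<in> H \<Longrightarrow> a h \<bullet> v = b h \<Longrightarrow> a h \<bullet> d \<le> 0"
  obtains e where "e > 0" "\<And>h. h \<in> H \<Longrightarrow> a h \<bullet> (v + e *\<^sub>R d) \<le> b h"
proof -
  have "\<forall>\<^sub>F e in at_right 0. a h \<bullet> (v + e *\<^sub>R d) \<le> b h" if "h \<in> H" for h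
  proof (cases "a h \<bullet> v = b h")
    case True
    have "a h \<bullet> (v + e *\<^sub>R d) \<le> b h" if "0 < e" for e
      using True assms(3)[OF \<open>h \<in> H\<close> True] that
      by (simp add: inner_add_right mult_nonneg_nonpos)
    then show ?thesis using eventually_at_right_less[of 0] by (auto elim: eventually_mono)
  next
    case False
    then have "a h \<bullet> v < b h" using assms(2)[OF that] by simp
    moreover have "((\<lambda>e. a h \<bullet> (v + e *\<^sub>R d)) \<longlongrightarrow> a h \<bullet> v) (at_right 0)"
      by (auto intro!: tendsto_eq_intros)
    ultimately have "\<forall>\<^sub>F e in at_right 0. a h \<bullet> (v + e *\<^sub>R d) < b h"
      by (intro order_tendstoD(2))
    then show ?thesis by (rule eventually_mono) simp
  qed
  then have "\<forall>\<^sub>F e in at_right 0. \<forall>h\<in>H. a h \<bullet> (v + e *\<^sub>R d) \<le> b h"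
    using \<open>finite H\<close> by (auto intro: eventually_ball_finite)
  then have "\<forall>\<^sub>F e in at_right 0. 0 < e \<and> (\<forall>h\<in>H. a h \<bullet> (v + e *\<^sub>R d) \<le> b h)"
    by (rule eventually_conj[OF eventually_at_right_less])
  then show ?thesis
    using that eventually_happens'[OF trivial_limit_at_right_real] by blast
qed

abbreviation facets_through :: "'a::euclidean_space set \<Rightarrow> 'a \<Rightarrow> 'a set set" where
  "facets_through P v \<equiv> {F. F facet_of P \<and> v \<in> F}"

lemma finite_facets_through:
  fixes P :: "'a::euclidean_space set"
  assumes "polyhedron P"
  shows "finite (facets_through P v)"
  by (rule finite_subset[OF _ finite_polyhedron_facets[OF assms]]) blast

lemma full_dim_polyhedron_facets_explicit:
  fixes P :: "'a::euclidean_space set"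
  assumes "polyhedron P" and "aff_dim P = int DIM('a)"
  obtains H :: "'a set set" and a b where "finite H"
    and "\<And>y. y \<in> P \<longleftrightarrow> (\<forall>h\<in>H. a h \<bullet> y \<le> b h)"
    and "\<And>C. C facet_of P \<longleftrightarrow> (\<exists>h. h \<in> H \<and> C = P \<inter> {x. a h \<bullet> x = b h})"
    and "\<And>h. h \<in> H \<Longrightarrow> affine hull (P \<inter> {x. a h \<bullet> x = b h}) = {x. a h \<bullet> x = b h}"
    and "rel_interior P = {z \<in> P. \<forall>h\<in>H. a h \<bullet> z < b h}"
proof -
  obtain H where "finite H" and seq: "P = affine hull P \<inter> \<Inter>H"
    and "\<And>h. h \<in> H \<Longrightarrow> \<exists>a b. a \<noteq> 0 \<and> h = {x. a \<bullet> x \<le> b}"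
    and min: "\<And>H'. H' \<subset> H \<Longrightarrow> P \<subset> affine hull P \<inter> \<Inter>H'"
    using \<open>polyhedron P\<close> by (simp add: polyhedron_Int_affine_minimal) meson
  then obtain a b where ab: "\<And>h. h \<in> H \<Longrightarrow> a h \<noteq> 0 \<and> h = {x. a h \<bullet> x \<le> b h}"
    by metis
  note facet = facet_of_polyhedron_explicit[OF \<open>finite H\<close> seq ab min]
  have "affine hull P = UNIV"
    using assms(2) aff_dim_eq_full by blast
  then have "P = \<Inter>H" using seq by simp
  then have inP: "y \<in> P \<longleftrightarrow> (\<forall>h\<in>H. a h \<bullet> y \<le> b h)" for y
    using ab by auto
  have hull: "affine hull (P \<inter> {x. a h \<bullet> x = b h}) = {x. a h \<bullet> x = b h}" if "h \<in> H" for h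
  proof (rule affine_hull_eq_hyperplane)
    show "a h \<noteq> 0" using ab that by blast
    have "(P \<inter> {x. a h \<bullet> x = b h}) facet_of P" using facet that by blast
    then show "aff_dim (P \<inter> {x. a h \<bullet> x = b h}) = int DIM('a) - 1"
      using assms(2) by (simp add: facet_of_def)
  qed blast
  show ?thesis
    by (rule that[OF \<open>finite H\<close> inP facet hull
          rel_interior_polyhedron_explicit[OF \<open>finite H\<close> seq ab min]])
qed

lemma exists_direction_parallel_to_facets:
  fixes P :: "'a::euclidean_space set"
  assumes "polyhedron P" and "aff_dim P = int DIM('a)" and "finite S" and "card S < DIM('a)"
    and facets: "\<And>C. C \<in> S \<Longrightarrow> C facet_of P"
  obtains d where "d \<noteq> 0"
    and "\<And>C x t. C \<in> S \<Longrightarrow> x \<in> affine hull C \<Longrightarrow> x + t *\<^sub>R d \<in> affine hull C"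
proof -
  have "\<exists>n c. affine hull C = {x. n \<bullet> x = c}" if C: "C \<in> S" for C
  proof -
    obtain n c where "n \<noteq> 0" and "P \<subseteq> {x. n \<bullet> x \<le> c}" and "C = P \<inter> {x. n \<bullet> x = c}"
      by (rule facet_of_polyhedron[OF assms(1) facets[OF C]])
    moreover have "aff_dim C = int DIM('a) - 1"
      using assms(2) facets[OF C] by (simp add: facet_of_def)
    ultimately have "affine hull C = {x. n \<bullet> x = c}"
      by (intro affine_hull_eq_hyperplane) auto
    then show ?thesis by blast
  qed
  then obtain n c where hyperplane: "\<And>C. C \<in> S \<Longrightarrow> affine hull C = {x. n C \<bullet> x = c C}"
    by metis
  obtain d where "d \<noteq> 0" and "\<And>C. C \<in> S \<Longrightarrow> n C \<bullet> d = 0"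
    using exists_nonzero_orthogonal_to_image[OF assms(3,4), of n] by blast
  then show ?thesis
    using that hyperplane by (simp add: inner_add_right)
qed

text \<open>Moving from v orthogonally to the normals of the facets in S keeps the point on these
  facets. The only other constraints tight at v describe the single facet F0; their normals may
  differ, but an interior point shows they all lie on the same side, so a choice of sign makes
  the direction feasible.\<close>

lemma polyhedron_direction_along_facets:
  fixes P :: "'a::euclidean_space set"
  assumes "polyhedron P" and "aff_dim P = int DIM('a)" and "v \<in> P"
    and S: "S \<subseteq> facets_through P v" and "card S < DIM('a)"
    and F0: "facets_through P v \<subseteq> insert F0 S"
  obtains d where "d \<noteq> 0" "v + d \<in> P" "\<And>C. C \<in> S \<Longrightarrow> v + d \<in> affine hull C"
proof -
  obtain H :: "'a set set" and a b where "finite H"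
    and inP: "\<And>y. y \<in> P \<longleftrightarrow> (\<forall>h\<in>H. a h \<bullet> y \<le> b h)"
    and facet: "\<And>C. C facet_of P \<longleftrightarrow> (\<exists>h. h \<in> H \<and> C = P \<inter> {x. a h \<bullet> x = b h})"
    and hull: "\<And>h. h \<in> H \<Longrightarrow> affine hull (P \<inter> {x. a h \<bullet> x = b h}) = {x. a h \<bullet> x = b h}"
    and rel: "rel_interior P = {z \<in> P. \<forall>h\<in>H. a h \<bullet> z < b h}"
    by (rule full_dim_polyhedron_facets_explicit[OF assms(1,2)]) (rule that)
  have "rel_interior P \<noteq> {}"
    using \<open>v \<in> P\<close> polyhedron_imp_convex[OF \<open>polyhedron P\<close>] rel_interior_eq_empty by blast
  then obtain z where z: "\<And>h. h \<in> H \<Longrightarrow> a h \<bullet> z < b h"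
    using rel by blast
  have "finite S"
    using S finite_facets_through[OF \<open>polyhedron P\<close>] by (rule finite_subset)
  then obtain d0 where "d0 \<noteq> 0"
    and parallel: "\<And>C x t. C \<in> S \<Longrightarrow> x \<in> affine hull C \<Longrightarrow> x + t *\<^sub>R d0 \<in> affine hull C"
    using exists_direction_parallel_to_facets[OF assms(1,2) _ \<open>card S < DIM('a)\<close>] S by blast
  let ?G = "{h \<in> H. a h \<bullet> v = b h \<and> P \<inter> {x. a h \<bullet> x = b h} = F0}"
  have hyperplane_F0: "{x. a h \<bullet> x = b h} = affine hull F0" if "h \<in> ?G" for h
    using hull that by auto
  have "a h \<bullet> z < b h" and "a h \<bullet> v = b h" if "h \<in> ?G" for h
    using z that by auto
  moreover have "{x. a h \<bullet> x = b h} = {x. a h' \<bullet> x = b h'}" if "h \<in> ?G" and "h' \<in> ?G" for h h'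
    using hyperplane_F0[OF that(1)] hyperplane_F0[OF that(2)] by simp
  ultimately obtain s :: real where "\<bar>s\<bar> = 1" and sign: "\<And>h. h \<in> ?G \<Longrightarrow> a h \<bullet> (s *\<^sub>R d0) \<le> 0"
    using common_hyperplane_consistent_sign[of ?G a z b v d0] by blast
  define d1 where "d1 = s *\<^sub>R d0"
  have "d1 \<noteq> 0" using \<open>d0 \<noteq> 0\<close> \<open>\<bar>s\<bar> = 1\<close> by (auto simp: d1_def)
  have along: "v + t *\<^sub>R d1 \<in> affine hull C" if "C \<in> S" for C t
    using parallel[OF that hull_inc, of v "t * s"] S that by (auto simp: d1_def)
  have tight: "a h \<bullet> d1 \<le> 0" if "h \<in> H" and "a h \<bullet> v = b h" for h
  proof -
    define C where "C = P \<inter> {x. a h \<bullet> x = b h}"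
    have "C \<in> insert F0 S"
      using F0 facet that \<open>v \<in> P\<close> by (auto simp: C_def)
    then consider "C \<in> S" | "C = F0" by blast
    then show ?thesis
    proof cases
      case 1
      have "v + 1 *\<^sub>R d1 \<in> affine hull C"
        using along[OF 1] .
      then have "a h \<bullet> (v + d1) = b h"
        using hull[OF \<open>h \<in> H\<close>] by (simp add: C_def)
      then show ?thesis using \<open>a h \<bullet> v = b h\<close> by (simp add: inner_add_right)
    next
      case 2
      then show ?thesis using sign that by (simp add: C_def d1_def)
    qed
  qed
  obtain e where "e > 0" and "\<And>h. h \<in> H \<Longrightarrow> a h \<bullet> (v + e *\<^sub>R d1) \<le> b h"
    using halfspaces_feasible_direction[OF \<open>finite H\<close>, of a v b d1] inP \<open>v \<in> P\<close> tight
    by blast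
  then have "v + e *\<^sub>R d1 \<in> P" using inP by blast
  moreover have "e *\<^sub>R d1 \<noteq> 0" using \<open>e > 0\<close> \<open>d1 \<noteq> 0\<close> by simp
  ultimately show ?thesis using that along by blast
qed

lemma polyhedron_points_near_on_facets:
  fixes P :: "'a::euclidean_space set"
  assumes "polyhedron P" and "aff_dim P = int DIM('a)" and "v \<in> P"
    and S: "S \<subseteq> facets_through P v" and "card S < DIM('a)"
    and "facets_through P v \<subseteq> insert F0 S" and "r > 0"
  obtains q where "q \<in> P" "q \<noteq> v" "dist q v < r" "\<And>C. C \<in> S \<Longrightarrow> q \<in> C"
proof -
  obtain d where "d \<noteq> 0" "v + d \<in> P" and along: "\<And>C. C \<in> S \<Longrightarrow> v + d \<in> affine hull C"
    using polyhedron_direction_along_facets assms(1-6) by blast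
  define t where "t = min 1 (r / (2 * norm d))"
  have "0 < t" "t \<le> 1" using \<open>r > 0\<close> \<open>d \<noteq> 0\<close> by (auto simp: t_def)
  define q where "q = (1 - t) *\<^sub>R v + t *\<^sub>R (v + d)"
  have "q \<in> P"
    using \<open>0 < t\<close> \<open>t \<le> 1\<close> \<open>v \<in> P\<close> \<open>v + d \<in> P\<close> polyhedron_imp_convex[OF \<open>polyhedron P\<close>]
    by (simp add: q_def convexD)
  moreover have "q \<noteq> v" using \<open>0 < t\<close> \<open>d \<noteq> 0\<close> by (simp add: q_def algebra_simps)
  moreover have "dist q v < r"
  proof -
    have "dist q v = t * norm d" using \<open>0 < t\<close> by (simp add: q_def dist_norm algebra_simps)
    also have "\<dots> \<le> r / (2 * norm d) * norm d"
      by (intro mult_right_mono) (auto simp: t_def)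
    also have "\<dots> = r / 2" using \<open>d \<noteq> 0\<close> by simp
    finally show ?thesis using \<open>r > 0\<close> by simp
  qed
  moreover have "q \<in> C" if "C \<in> S" for C
  proof -
    have "C face_of P" "v \<in> C" using S that by (auto dest: facet_of_imp_face_of)
    then have "q \<in> affine hull C"
      using along[OF that] by (simp add: q_def mem_affine hull_inc)
    then show ?thesis
      using face_of_imp_eq_affine_Int[OF polyhedron_imp_convex[OF \<open>polyhedron P\<close>] \<open>C face_of P\<close>]
        \<open>q \<in> P\<close> by blast
  qed
  ultimately show ?thesis using that by blast
qed

lemma Inter_facets_through_extreme_point:
  fixes P :: "'a::euclidean_space set"
  assumes "polyhedron P" and "w extreme_point_of P" and "P \<noteq> {w}"
  shows "\<Inter>(facets_through P w) = {w}"
proof -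
  have "{w} face_of P" using assms(2) by (simp add: face_of_singleton)
  then have "{w} = \<Inter>{F. F facet_of P \<and> {w} \<subseteq> F}"
    using assms(3) by (intro face_of_polyhedron[OF assms(1)]) auto
  then show ?thesis by simp
qed

lemma simple_polytope_extreme_point_if_card_facets:
  fixes P :: "(real^'n) set"
  assumes "simple_polytope P" and "v \<in> P" and "CARD('n) \<le> card (facets_through P v)"
  shows "v extreme_point_of P"
proof -
  have "polytope P" and dimP: "aff_dim P = int CARD('n)"
    and simple: "\<And>w. w extreme_point_of P \<Longrightarrow> card (facets_through P w) = CARD('n)"
    using assms(1) by (auto simp: simple_polytope_def)
  have "polyhedron P" using \<open>polytope P\<close> by (rule polytope_imp_polyhedron)
  define K where "K = \<Inter>(facets_through P v)"
  have "facets_through P v \<noteq> {}"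
  proof
    assume "facets_through P v = {}"
    then have "card (facets_through P v) = 0" by (simp only: card.empty)
    then show False using assms(3) by simp
  qed
  then have "K face_of P"
    unfolding K_def by (intro face_of_Inter) (auto dest: facet_of_imp_face_of)
  moreover have "v \<in> K" by (simp add: K_def)
  moreover have "compact K"
    using face_of_imp_compact[OF polytope_imp_convex polytope_imp_compact] \<open>polytope P\<close> \<open>K face_of P\<close>
    by blast
  ultimately obtain w where "w extreme_point_of K"
    using extreme_point_exists_convex face_of_imp_convex by blast
  then have "w extreme_point_of P" and "w \<in> K"
    using extreme_point_of_face[OF \<open>K face_of P\<close>] by (auto simp: extreme_point_of_def)
  have sub: "facets_through P v \<subseteq> facets_through P w"
    using \<open>w \<in> K\<close> by (auto simp: K_def)
  have fin: "finite (facets_through P w)"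
    by (rule finite_facets_through[OF \<open>polyhedron P\<close>])
  have "card (facets_through P v) = card (facets_through P w)"
    using card_mono[OF fin sub] simple[OF \<open>w extreme_point_of P\<close>] assms(3) by simp
  then have "facets_through P v = facets_through P w"
    by (rule card_subset_eq[OF fin sub])
  moreover have "P \<noteq> {w}" using dimP by auto
  ultimately have "K = {w}"
    using Inter_facets_through_extreme_point[OF \<open>polyhedron P\<close> \<open>w extreme_point_of P\<close>]
    by (simp add: K_def)
  then show ?thesis using \<open>v \<in> K\<close> \<open>w extreme_point_of P\<close> by simp
qed

section \<open>The quotient model\<close>

lemma lattice_add: "a \<in> lattice \<Longrightarrow> b \<in> lattice \<Longrightarrow> a + b \<in> lattice"
  by (auto simp: lattice_def)

lemma lattice_uminus: "a \<in> lattice \<Longrightarrow> - a \<in> lattice"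
  by (auto simp: lattice_def)

lemma countable_lattice: "countable (lattice :: (real^'n) set)"
  unfolding lattice_def by (rule countable_vector) (simp add: countable_int)

lemma isotropy_zero: "0 \<in> isotropy P lam p"
  unfolding isotropy_def lattice_def by (auto intro!: bexI[of _ 0] span_zero)

lemma isotropy_add:
  assumes "s \<in> isotropy P lam p" and "t \<in> isotropy P lam p"
  shows "s + t \<in> isotropy P lam p"
proof -
  obtain w w' where w: "w \<in> span (ivec ` lam ` facets_through P p)" "s - w \<in> lattice"
    and w': "w' \<in> span (ivec ` lam ` facets_through P p)" "t - w' \<in> lattice"
    using assms by (auto simp: isotropy_def)
  have "s + t - (w + w') \<in> lattice"
    unfolding add_diff_add using w(2) w'(2) by (rule lattice_add)
  then show ?thesis
    using w(1) w'(1) unfolding isotropy_def by (auto intro!: bexI[of _ "w + w'"] span_add)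
qed

lemma isotropy_uminus:
  assumes "s \<in> isotropy P lam p"
  shows "- s \<in> isotropy P lam p"
proof -
  obtain w where w: "w \<in> span (ivec ` lam ` facets_through P p)" "s - w \<in> lattice"
    using assms by (auto simp: isotropy_def)
  have "- s - (- w) \<in> lattice"
    unfolding minus_diff_minus using w(2) by (rule lattice_uminus)
  then show ?thesis
    using w(1) unfolding isotropy_def by (auto intro!: bexI[of _ "- w"] span_neg)
qed

lemma isotropy_diff:
  "s \<in> isotropy P lam p \<Longrightarrow> t \<in> isotropy P lam p \<Longrightarrow> s - t \<in> isotropy P lam p"
  using isotropy_add[OF _ isotropy_uminus, of s P lam p t] by simp

lemma subspace_subset_isotropy_iff:
  assumes "subspace V"
  shows "V \<subseteq> isotropy P lam p \<longleftrightarrow> V \<subseteq> span (ivec ` lam ` facets_through P p)"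
proof
  assume "V \<subseteq> isotropy P lam p"
  then show "V \<subseteq> span (ivec ` lam ` facets_through P p)"
    using assms countable_lattice
    by (intro subspace_subset_if_countable_offsets) (auto simp: isotropy_def)
next
  assume "V \<subseteq> span (ivec ` lam ` facets_through P p)"
  moreover have "0 \<in> lattice" by (simp add: lattice_def)
  ultimately show "V \<subseteq> isotropy P lam p"
    unfolding isotropy_def by force
qed

definition qclass ::
  "(real^'n) set \<Rightarrow> ((real^'n) set \<Rightarrow> int^'n) \<Rightarrow> real^'n \<Rightarrow> real^'n \<Rightarrow> ((real^'n) \<times> (real^'n)) set"
  where "qclass P lam p g = {(p, h) | h. g - h \<in> isotropy P lam p}"

lemma mem_qclass [simp]: "(q, h) \<in> qclass P lam p g \<longleftrightarrow> q = p \<and> g - h \<in> isotropy P lam p"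
  by (auto simp: qclass_def)

lemma qrel_Image: "p \<in> P \<Longrightarrow> qrel P lam `` {(p, g)} = qclass P lam p g"
  by (auto simp: qrel_def qclass_def)

lemma quotient_qrelE:
  assumes "y \<in> (A \<times> UNIV) // qrel P lam" and "A \<subseteq> P"
  obtains p g where "p \<in> A" "y = qclass P lam p g"
  using assms qrel_Image unfolding quotient_def by blast

lemma qclass_in_quotient:
  "p \<in> A \<Longrightarrow> A \<subseteq> P \<Longrightarrow> qclass P lam p g \<in> (A \<times> UNIV) // qrel P lam"
  using qrel_Image[of p P lam g] unfolding quotient_def by blast

lemma qclass_cong:
  assumes "g' - g \<in> isotropy P lam p"
  shows "qclass P lam p g = qclass P lam p g'"
proof -
  have "g - h \<in> isotropy P lam p \<longleftrightarrow> g' - h \<in> isotropy P lam p" for h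
  proof
    assume "g - h \<in> isotropy P lam p"
    then have "(g' - g) + (g - h) \<in> isotropy P lam p" using assms by (rule isotropy_add[rotated])
    then show "g' - h \<in> isotropy P lam p" by simp
  next
    assume "g' - h \<in> isotropy P lam p"
    then have "(g' - h) - (g' - g) \<in> isotropy P lam p" using assms by (rule isotropy_diff)
    then show "g - h \<in> isotropy P lam p" by simp
  qed
  then show ?thesis by (auto simp: qclass_def)
qed

lemma qspace_member_eq_qclass:
  assumes "x \<in> qspace P lam" and "(v, g) \<in> x"
  shows "v \<in> P" and "x = qclass P lam v g"
proof -
  obtain p g' where "p \<in> P" and x: "x = qclass P lam p g'"
    using assms(1) unfolding qspace_def by (rule quotient_qrelE) simp
  then show "v \<in> P" and "x = qclass P lam v g"
    using assms(2) qclass_cong[of g' g P lam p] by auto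
qed

lemma qclass_isotropy_UNIV: "isotropy P lam p = UNIV \<Longrightarrow> qclass P lam p g = {p} \<times> UNIV"
  by (auto simp: qclass_def)

lemma qopen_quotient_open:
  assumes "open W"
  shows "qopen P lam (((P \<inter> W) \<times> UNIV) // qrel P lam)"
proof -
  have "\<Union>(((P \<inter> W) \<times> UNIV) // qrel P lam) = (P \<inter> W) \<times> UNIV"
  proof
    show "\<Union>(((P \<inter> W) \<times> UNIV) // qrel P lam) \<subseteq> (P \<inter> W) \<times> UNIV"
      by (auto elim!: quotient_qrelE)
    show "(P \<inter> W) \<times> UNIV \<subseteq> \<Union>(((P \<inter> W) \<times> UNIV) // qrel P lam)"
    proof clarify
      fix q h assume "q \<in> P" "q \<in> W"
      then have "qclass P lam q h \<in> ((P \<inter> W) \<times> UNIV) // qrel P lam"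
        by (intro qclass_in_quotient) auto
      moreover have "(q, h) \<in> qclass P lam q h" by (simp add: isotropy_zero)
      ultimately show "(q, h) \<in> \<Union>(((P \<inter> W) \<times> UNIV) // qrel P lam)" by blast
    qed
  qed
  moreover have "openin (top_of_set (P \<times> UNIV)) ((P \<inter> W) \<times> (UNIV :: (real^'n) set))"
    using openin_open_Int[of "W \<times> UNIV" "P \<times> UNIV"] assms by (simp add: open_Times Times_Int_Times)
  moreover have "((P \<inter> W) \<times> UNIV) // qrel P lam \<subseteq> qspace P lam"
    unfolding qspace_def quotient_def by blast
  ultimately show ?thesis
    unfolding qopen_def by simp
qed

lemma qopen_contains_nearby_qclass:
  assumes "qopen P lam U" and "qclass P lam v g \<in> U"
  obtains r where "r > 0" and "\<And>q. q \<in> P \<Longrightarrow> dist q v < r \<Longrightarrow> qclass P lam q g \<in> U"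
proof -
  have "openin (top_of_set (P \<times> UNIV)) (\<Union>U)"
    using assms(1) by (simp add: qopen_def)
  then obtain T where "open T" and U_T: "\<Union>U = (P \<times> UNIV) \<inter> T"
    unfolding openin_open by blast
  have "(v, g) \<in> qclass P lam v g" by (simp add: isotropy_zero)
  then have "(v, g) \<in> T" using U_T assms(2) by blast
  then obtain r where "r > 0" and ball: "ball (v, g) r \<subseteq> T"
    using \<open>open T\<close> open_contains_ball by blast
  have "qclass P lam q g \<in> U" if q: "q \<in> P" "dist q v < r" for q
  proof -
    have "(q, g) \<in> T" using ball q(2) by (auto simp: dist_Pair_Pair dist_commute)
    then obtain y where "y \<in> U" and "(q, g) \<in> y" using U_T q(1) by blast
    moreover obtain q' h where "y = qclass P lam q' h"
      using \<open>y \<in> U\<close> assms(1) unfolding qopen_def qspace_def by (blast elim: quotient_qrelE)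
    ultimately show ?thesis using qclass_cong[of h g P lam q] by auto
  qed
  with \<open>r > 0\<close> show ?thesis using that by blast
qed

lemma fixed_by_qclass_iff: "fixed_by H (qclass P lam p g) \<longleftrightarrow> H \<subseteq> isotropy P lam p"
proof
  assume fixed: "fixed_by H (qclass P lam p g)"
  show "H \<subseteq> isotropy P lam p"
  proof
    fix t assume "t \<in> H"
    have "(p, g + t) \<in> tact t (qclass P lam p g)"
      unfolding tact_def by (rule image_eqI[of _ _ "(p, g)"]) (simp_all add: isotropy_zero)
    then have "- t \<in> isotropy P lam p"
      using fixed \<open>t \<in> H\<close> by (simp add: fixed_by_def)
    then show "t \<in> isotropy P lam p" using isotropy_uminus by fastforce
  qed
next
  assume sub: "H \<subseteq> isotropy P lam p"
  have "tact t (qclass P lam p g) = qclass P lam p g" if "t \<in> isotropy P lam p" for t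
  proof
    show "tact t (qclass P lam p g) \<subseteq> qclass P lam p g"
      using isotropy_diff[OF _ that] by (auto simp: tact_def diff_diff_add[symmetric])
    show "qclass P lam p g \<subseteq> tact t (qclass P lam p g)"
    proof clarify
      fix q h assume "(q, h) \<in> qclass P lam p g"
      then have "q = p" and "(g - h) + t \<in> isotropy P lam p"
        using isotropy_add[OF _ that] by auto
      then have "g - (h - t) \<in> isotropy P lam p"
        by (simp add: algebra_simps)
      then show "(q, h) \<in> tact t (qclass P lam p g)"
        unfolding tact_def using \<open>q = p\<close> by (intro image_eqI[of _ _ "(p, h - t)"]) auto
    qed
  qed
  then show "fixed_by H (qclass P lam p g)"
    using sub by (auto simp: fixed_by_def)
qed

section \<open>Fixed points of a codimension-one subtorus\<close>

lemma Pi_facets_if_fixed_near_vertex: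
  fixes P :: "(real^'n) set"
  assumes "simple_polytope P" and "v extreme_point_of P"
    and "q \<in> P" and "q \<noteq> v" and near: "facets_through P q \<subseteq> facets_through P v"
    and "subspace V" and dimV: "dim V = CARD('n) - 1" and "V \<subseteq> isotropy P lam q"
  shows "\<exists>S \<subseteq> facets_through P v. card S = CARD('n) - 1 \<and> (\<forall>F\<in>S. lam F \<in> Pi_lattice V)"
proof -
  have "polyhedron P" and dimP: "aff_dim P = int CARD('n)"
    and card_v: "card (facets_through P v) = CARD('n)"
    using assms(1,2) by (auto simp: simple_polytope_def polytope_imp_polyhedron)
  have fin_q: "finite (facets_through P q)" and fin_v: "finite (facets_through P v)"
    using finite_facets_through[OF \<open>polyhedron P\<close>] by auto
  let ?N = "ivec ` lam ` facets_through P q"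
  have "card ?N \<le> card (lam ` facets_through P q)"
    using fin_q by (intro card_image_le) simp
  also have "\<dots> \<le> card (facets_through P q)"
    using fin_q by (rule card_image_le)
  finally have card_N: "card ?N \<le> card (facets_through P q)" .
  have "V \<subseteq> span ?N"
    using subspace_subset_isotropy_iff[OF \<open>subspace V\<close>] assms(8) by blast
  then have "dim V \<le> card ?N" using fin_q by (intro dim_le_card) auto
  also note card_N
  finally have "CARD('n) - 1 \<le> card (facets_through P q)" using dimV by simp
  moreover have "card (facets_through P q) \<noteq> CARD('n)"
  proof
    assume "card (facets_through P q) = CARD('n)"
    then have "facets_through P q = facets_through P v"
      using card_v by (intro card_subset_eq[OF fin_v near]) simp
    moreover have "P \<noteq> {v}" using dimP by auto
    ultimately have "q \<in> {v}"
      using Inter_facets_through_extreme_point[OF \<open>polyhedron P\<close> assms(2)] by blast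
    then show False using \<open>q \<noteq> v\<close> by simp
  qed
  moreover have "card (facets_through P q) \<le> CARD('n)"
    using card_mono[OF fin_v near] card_v by simp
  ultimately have card_q: "card (facets_through P q) = CARD('n) - 1" by linarith
  have "dim (span ?N) \<le> dim V"
    using dim_le_card'[of ?N] fin_q card_N card_q dimV by simp
  then have "V = span ?N"
    using subspace_dim_equal[OF \<open>subspace V\<close> subspace_span \<open>V \<subseteq> span ?N\<close>] by blast
  then have "\<forall>F\<in>facets_through P q. lam F \<in> Pi_lattice V"
    by (auto simp: Pi_lattice_def span_base)
  then show ?thesis using near card_q by blast
qed

lemma isolated_fixed_point_if_no_Pi_facets:
  fixes P :: "(real^'n) set"
  assumes "simple_polytope P" and "v extreme_point_of P" and iso: "isotropy P lam v = UNIV"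
    and "subtorus_codim1 V"
    and none: "\<not> (\<exists>S \<subseteq> facets_through P v. card S = CARD('n) - 1 \<and> (\<forall>F\<in>S. lam F \<in> Pi_lattice V))"
  shows "isolated_fixed_point P lam V (qclass P lam v g)"
proof -
  have "polytope P" using assms(1) by (simp add: simple_polytope_def)
  have "subspace V" and dimV: "dim V = CARD('n) - 1"
    using assms(4) by (auto simp: subtorus_codim1_def)
  have "v \<in> P" using assms(2) by (simp add: extreme_point_of_def)
  define W where "W = - \<Union>{F. F facet_of P \<and> v \<notin> F}"
  have "closed (\<Union>{F. F facet_of P \<and> v \<notin> F})"
  proof (rule closed_Union)
    show "finite {F. F facet_of P \<and> v \<notin> F}"
      using finite_polytope_facets[OF \<open>polytope P\<close>] by (rule rev_finite_subset) blast
    show "\<forall>F\<in>{F. F facet_of P \<and> v \<notin> F}. closed F"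
      using face_of_imp_closed[OF polytope_imp_convex polytope_imp_closed] \<open>polytope P\<close>
      by (auto dest: facet_of_imp_face_of)
  qed
  then have "open W" by (simp add: W_def open_Compl)
  define U where "U = ((P \<inter> W) \<times> UNIV) // qrel P lam"
  have "qopen P lam U" unfolding U_def using \<open>open W\<close> by (rule qopen_quotient_open)
  moreover have "qclass P lam v g \<in> U"
    unfolding U_def using \<open>v \<in> P\<close> by (intro qclass_in_quotient) (auto simp: W_def)
  moreover have "y = qclass P lam v g" if "y \<in> U" and "fixed_by V y" for y
  proof -
    obtain q h where q: "q \<in> P \<inter> W" and y: "y = qclass P lam q h"
      using \<open>y \<in> U\<close> unfolding U_def by (rule quotient_qrelE) simp
    have "V \<subseteq> isotropy P lam q" using \<open>fixed_by V y\<close> y by (simp add: fixed_by_qclass_iff)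
    moreover have "facets_through P q \<subseteq> facets_through P v"
      using q by (auto simp: W_def)
    ultimately have "q = v"
      using Pi_facets_if_fixed_near_vertex[OF assms(1,2)] q none \<open>subspace V\<close> dimV by blast
    then show ?thesis using y iso by (simp add: qclass_isotropy_UNIV)
  qed
  moreover have "fixed_by V (qclass P lam v g)" using iso by (simp add: fixed_by_qclass_iff)
  ultimately show ?thesis unfolding isolated_fixed_point_def by blast
qed

lemma not_isolated_fixed_point_if_Pi_facets:
  fixes P :: "(real^'n) set"
  assumes "simple_polytope P" and "v extreme_point_of P"
    and span: "span (ivec ` lam ` facets_through P v) = UNIV" and "subtorus_codim1 V"
    and S: "S \<subseteq> facets_through P v" and card_S: "card S = CARD('n) - 1"
    and Pi: "\<forall>F\<in>S. lam F \<in> Pi_lattice V"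
  shows "\<not> isolated_fixed_point P lam V (qclass P lam v g)"
proof
  assume "isolated_fixed_point P lam V (qclass P lam v g)"
  then obtain U where "qopen P lam U" and "qclass P lam v g \<in> U"
    and isolated: "\<And>y. y \<in> U \<Longrightarrow> fixed_by V y \<Longrightarrow> y = qclass P lam v g"
    unfolding isolated_fixed_point_def by blast
  have "polytope P" and dimP: "aff_dim P = int CARD('n)"
    and card_v: "card (facets_through P v) = CARD('n)"
    using assms(1,2) by (auto simp: simple_polytope_def)
  have "polyhedron P" using \<open>polytope P\<close> by (rule polytope_imp_polyhedron)
  have "v \<in> P" using assms(2) by (simp add: extreme_point_of_def)
  have "finite S" using S finite_facets_through[OF \<open>polyhedron P\<close>] by (rule finite_subset)
  then have "card (facets_through P v - S) = 1" using card_Diff_subset[OF _ S] card_v card_S by simp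
  then obtain F0 where "facets_through P v - S = {F0}" by (rule card_1_singletonE)
  then have F0: "facets_through P v \<subseteq> insert F0 S" by blast
  have "subspace V" and "dim V = DIM(real^'n) - 1"
    using assms(4) by (auto simp: subtorus_codim1_def)
  moreover have "lam ` facets_through P v \<subseteq> insert (lam F0) (lam ` S)"
    using F0 by blast
  moreover have "ivec ` lam ` S \<subseteq> V"
    using Pi by (auto simp: Pi_lattice_def)
  ultimately have span_S: "span (ivec ` lam ` S) = V"
    using span_image_eq_codim1_subspace[OF span] by blast
  obtain r where "r > 0" and near: "\<And>q. q \<in> P \<Longrightarrow> dist q v < r \<Longrightarrow> qclass P lam q g \<in> U"
    using qopen_contains_nearby_qclass[OF \<open>qopen P lam U\<close> \<open>qclass P lam v g \<in> U\<close>] by blast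
  have "aff_dim P = int DIM(real^'n)" and "card S < DIM(real^'n)"
    using dimP card_S by auto
  then obtain q where "q \<in> P" "q \<noteq> v" "dist q v < r" and q_S: "\<And>C. C \<in> S \<Longrightarrow> q \<in> C"
    using polyhedron_points_near_on_facets[OF \<open>polyhedron P\<close> _ \<open>v \<in> P\<close> S _ F0 \<open>r > 0\<close>]
    by blast
  have "V \<subseteq> span (ivec ` lam ` facets_through P q)"
    unfolding span_S[symmetric] using S q_S by (intro span_mono image_mono) auto
  then have "fixed_by V (qclass P lam q g)"
    using subspace_subset_isotropy_iff[OF \<open>subspace V\<close>] by (simp add: fixed_by_qclass_iff)
  then have "qclass P lam q g = qclass P lam v g"
    using isolated near \<open>q \<in> P\<close> \<open>dist q v < r\<close> by blast
  moreover have "(q, g) \<in> qclass P lam q g" by (simp add: isotropy_zero)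
  ultimately show False using \<open>q \<noteq> v\<close> by simp
qed

theorem lemma2p2:
  fixes P :: "(real^'n) set" and lam :: "(real^'n) set \<Rightarrow> int^'n"
    and V :: "(real^'n) set" and x :: "((real^'n) \<times> (real^'n)) set"
    and v g :: "real^'n"
  assumes "simple_polytope P"
    and "char_function P lam"
    and "subtorus_codim1 V"
    and "x \<in> qspace P lam"
    and "fixed_by UNIV x"
    and "(v, g) \<in> x"
  shows "\<not> isolated_fixed_point P lam V x \<longleftrightarrow>
    (\<exists>S. S \<subseteq> {F. F facet_of P \<and> v \<in> F} \<and> card S = CARD('n) - 1 \<and>
         (\<forall>F\<in>S. lam F \<in> Pi_lattice V))"
proof -
  have "v \<in> P" and x: "x = qclass P lam v g"
    using qspace_member_eq_qclass[OF assms(4,6)] by auto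
  have iso: "isotropy P lam v = UNIV"
    using assms(5) x by (auto simp: fixed_by_qclass_iff)
  then have span: "span (ivec ` lam ` facets_through P v) = UNIV"
    using subspace_subset_isotropy_iff[OF subspace_UNIV, of P lam v] by auto
  have "polyhedron P"
    using assms(1) by (simp add: simple_polytope_def polytope_imp_polyhedron)
  have "span ((ivec \<circ> lam) ` facets_through P v) = UNIV"
    using span by (simp add: image_comp)
  from DIM_le_card_if_span_UNIV[OF finite_facets_through[OF \<open>polyhedron P\<close>] this]
  have "CARD('n) \<le> card (facets_through P v)" by simp
  then have "v extreme_point_of P"
    using simple_polytope_extreme_point_if_card_facets[OF assms(1) \<open>v \<in> P\<close>] by blast
  show ?thesis
    using isolated_fixed_point_if_no_Pi_facets[OF assms(1) \<open>v extreme_point_of P\<close> iso assms(3)]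
      not_isolated_fixed_point_if_Pi_facets[OF assms(1) \<open>v extreme_point_of P\<close> span assms(3)]
    unfolding x by blast
qed

end
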